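(* Consider the system $\dot x=f(x)+g(x)(u+\Delta(x,t))$, $x\in\mathbb{R}^n$, $u\in\mathbb{R}^m$, $m<n$, with $f$ $\mathcal{C}^2$, the columns of $g$ linearly independent and locally Lipschitz, and $\|\Delta(x,t)\|\le\Delta_M$. Let $x_\star$ be a $T$-periodic solution of $\dot x=f(x)$ with $\|f(x_\star(t))\|>0$ and orbit $\eta_\star$, and let $k$ be $\mathcal{C}^2$ with $k(x_\star(t))\equiv0$ rendering $x_\star$ exponentially orbitally stable for $\dot\chi=f(\chi)+g(\chi)k(\chi)$. Let $\sigma:\mathbb{R}^n\to\mathbb{R}^m$ solve Problem 1. Then there exists a tubular neighbourhood $\mathcal N$ of $\eta_\star$ such that, if the states of the system are restricted to $\Sigma=\{x:\sigma(x)=0\}$ within $\mathcal N$, all solutions converge to $\eta_\star$; equivalently, $x_\star$ is asymptotically orbitally stable therein.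
   Context: Equivalent control: for a switching function $\sigma$, the control $u_{eq}$ obtained from requiring $\frac{d}{dt}\sigma(x(t))\equiv0$ along motions on $\Sigma$; motion in sliding mode evolves as the system with $u=u_{eq}$. Problem 1: find a time-invariant $\mathcal{C}^2$ map $\sigma:\mathbb{R}^n\to\mathbb{R}^m$ such that, when restricted to $\Sigma$, for any $x$ in some tubular neighbourhood of $\eta_\star$ the system experiences $u_{eq}=\hat k(x)-\Delta(x,t)$, where $\hat k$ is $\mathcal{C}^1$ with $\hat k(y)=0$ and $D\hat k(y)=Dk(y)$ for all $y\in\eta_\star$. *)

theory Defs
  imports "HOL-Analysis.Analysis"
begin

definition C1_on :: "'a::real_normed_vector set \<Rightarrow> ('a \<Rightarrow> 'b::real_normed_vector) \<Rightarrow> bool" where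
  "C1_on S F \<longleftrightarrow> (\<exists>F'. (\<forall>x\<in>S. (F has_derivative blinfun_apply (F' x)) (at x)) \<and> continuous_on S F')"

definition C2_on :: "'a::real_normed_vector set \<Rightarrow> ('a \<Rightarrow> 'b::real_normed_vector) \<Rightarrow> bool" where
  "C2_on S F \<longleftrightarrow> (\<exists>F'. (\<forall>x\<in>S. (F has_derivative blinfun_apply (F' x)) (at x)) \<and> C1_on S F')"

definition tube :: "'a::metric_space set \<Rightarrow> real \<Rightarrow> 'a set" where
  "tube eta e = {x. infdist x eta < e}"

text \<open>Exponential orbital stability of the orbit eta for the autonomous system chi' = F chi
  (time-invariant, so initial time 0 is taken).\<close>

definition exp_orbitally_stable :: "('a::euclidean_space \<Rightarrow> 'a) \<Rightarrow> 'a set \<Rightarrow> bool" where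
  "exp_orbitally_stable F eta \<longleftrightarrow>
     (\<exists>\<delta>>0. \<exists>C>0. \<exists>lam>0. \<forall>chi b.
        b \<ge> 0 \<and> (\<forall>t\<in>{0..b}. (chi has_vector_derivative F (chi t)) (at t within {0..b}))
        \<and> infdist (chi 0) eta < \<delta>
        \<longrightarrow> (\<forall>t\<in>{0..b}. infdist (chi t) eta \<le> C * exp (- lam * t) * infdist (chi 0) eta))"

text \<open>Equivalent control: the u making d/dt sigma(x(t)) = 0 along motions of
  x' = f x + g x (u + Delta x t).\<close>

definition ueq_set ::
  "(real^'n::finite \<Rightarrow> real^'m::finite) \<Rightarrow> (real^'n \<Rightarrow> real^'n) \<Rightarrow> (real^'n \<Rightarrow> real^'m^'n)
     \<Rightarrow> (real^'n \<Rightarrow> real \<Rightarrow> real^'m) \<Rightarrow> real^'n \<Rightarrow> real \<Rightarrow> (real^'m) set" where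
  "ueq_set \<sigma> f g \<Delta> x t = {u. frechet_derivative \<sigma> (at x) (f x + g x *v (u + \<Delta> x t)) = 0}"

definition ueq ::
  "(real^'n::finite \<Rightarrow> real^'m::finite) \<Rightarrow> (real^'n \<Rightarrow> real^'n) \<Rightarrow> (real^'n \<Rightarrow> real^'m^'n)
     \<Rightarrow> (real^'n \<Rightarrow> real \<Rightarrow> real^'m) \<Rightarrow> real^'n \<Rightarrow> real \<Rightarrow> real^'m" where
  "ueq \<sigma> f g \<Delta> x t = (THE u. u \<in> ueq_set \<sigma> f g \<Delta> x t)"

text \<open>Problem 1: sigma is C^2 and, on Sigma within some tubular neighbourhood of eta,
  the equivalent control is (uniquely) khat x - Delta x t, with khat C^1,
  khat = 0 and D khat = D k on eta.\<close>

definition solves_problem1 ::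
  "(real^'n::finite \<Rightarrow> real^'n) \<Rightarrow> (real^'n \<Rightarrow> real^'m::finite^'n) \<Rightarrow> (real^'n \<Rightarrow> real \<Rightarrow> real^'m)
     \<Rightarrow> (real^'n \<Rightarrow> real^'m) \<Rightarrow> (real^'n) set \<Rightarrow> (real^'n \<Rightarrow> real^'m) \<Rightarrow> bool" where
  "solves_problem1 f g \<Delta> k eta \<sigma> \<longleftrightarrow>
     C2_on UNIV \<sigma> \<and>
     (\<exists>e>0. \<exists>khat :: real^'n \<Rightarrow> real^'m.
        C1_on UNIV khat \<and>
        (\<forall>y\<in>eta. khat y = 0 \<and> frechet_derivative khat (at y) = frechet_derivative k (at y)) \<and>
        (\<forall>x\<in>{x. \<sigma> x = 0} \<inter> tube eta e. \<forall>t. ueq_set \<sigma> f g \<Delta> x t = {khat x - \<Delta> x t}))"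

definition sliding_motion ::
  "(real^'n::finite \<Rightarrow> real^'n) \<Rightarrow> (real^'n \<Rightarrow> real^'m::finite^'n) \<Rightarrow> (real^'n \<Rightarrow> real \<Rightarrow> real^'m)
     \<Rightarrow> (real^'n \<Rightarrow> real^'m) \<Rightarrow> (real^'n) set \<Rightarrow> (real \<Rightarrow> real^'n) \<Rightarrow> real \<Rightarrow> bool" where
  "sliding_motion f g \<Delta> \<sigma> N x t0 \<longleftrightarrow>
     (\<forall>t\<ge>t0. \<sigma> (x t) = 0 \<and> x t \<in> N \<and>
        (x has_vector_derivative
           (f (x t) + g (x t) *v (ueq \<sigma> f g \<Delta> (x t) t + \<Delta> (x t) t))) (at t within {t0..}))"

end

theory Submission
  imports Defs
begin

text \<open>
  On \<Sigma> the equivalent control is khat - \<Delta>, so sliding motions solve x' = f x + g x khat x.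
  This field differs from F = f + g k by g (khat - k), which is o(infdist x \<eta>) because khat and
  k agree to first order on the orbit \<eta>. Over a window of length \<tau>, compare a sliding motion
  with the F-trajectory starting at the same point: exponential orbital stability brings the
  distance of the latter to \<eta> below a quarter of the initial distance, and Gronwall's inequality
  keeps the two trajectories within another quarter of it. Hence the distance to \<eta> halves over
  every window and tends to 0.
\<close>

section \<open>Local Lipschitz continuity\<close>

definition locally_lipschitz :: "('a::metric_space \<Rightarrow> 'b::metric_space) \<Rightarrow> bool" where
  "locally_lipschitz F \<longleftrightarrow> (\<forall>x. \<exists>e>0. \<exists>L. L-lipschitz_on (ball x e) F)"

lemma continuous_on_if_locally_lipschitz:
  assumes "locally_lipschitz F"
  shows "continuous_on UNIV F"
proof (rule continuous_at_imp_continuous_on, intro ballI)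
  fix x
  obtain e L where "e > 0" "L-lipschitz_on (ball x e) F"
    using assms unfolding locally_lipschitz_def by blast
  then show "isCont F x"
    using continuous_on_interior lipschitz_on_continuous_on by fastforce
qed

lemma lipschitz_on_compact_if_locally_lipschitz:
  fixes F :: "'a::euclidean_space \<Rightarrow> 'b::metric_space"
  assumes "locally_lipschitz F" "compact K"
  obtains L where "L-lipschitz_on K F"
proof -
  have "local_lipschitz {0::real} K (\<lambda>_. F)"
  proof (rule local_lipschitzI)
    fix t x
    obtain e L where "e > 0" "L-lipschitz_on (ball x e) F"
      using assms(1) unfolding locally_lipschitz_def by blast
    moreover have "cball x (e/2) \<inter> K \<subseteq> ball x e"
      using \<open>e > 0\<close> by auto
    ultimately have "L-lipschitz_on (cball x (e/2) \<inter> K) F"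
      using lipschitz_on_subset by blast
    then show "\<exists>u>0. \<exists>L. \<forall>t\<in>cball t u \<inter> {0}. L-lipschitz_on (cball x u \<inter> K) F"
      using \<open>e > 0\<close> half_gt_zero by blast
  qed
  then obtain L where "\<And>t. t \<in> {0::real} \<Longrightarrow> L-lipschitz_on K F"
    by (rule local_lipschitz_compact_implies_lipschitz[OF _ assms(2)]) auto
  then show ?thesis
    using that by blast
qed

lemma bounded_image_if_lipschitz_on:
  assumes "L-lipschitz_on S F" "bounded S"
  shows "bounded (F ` S)"
proof (cases "S = {}")
  case False
  then obtain a where "a \<in> S" by blast
  moreover obtain B where "\<forall>x\<in>S. dist a x \<le> B"
    using assms(2) bounded_any_center by blast
  ultimately have "dist (F a) (F x) \<le> L * B" if "x \<in> S" for x
    using that lipschitz_onD[OF assms(1)] lipschitz_on_nonneg[OF assms(1)]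
    by (meson mult_left_mono order_trans)
  then show ?thesis
    unfolding bounded_def by blast
qed simp

lemma (in bounded_bilinear) lipschitz_on_prod:
  assumes f: "Lf-lipschitz_on S f" and g: "Lg-lipschitz_on S g"
    and "bounded (f ` S)" "bounded (g ` S)"
  obtains L where "L-lipschitz_on S (\<lambda>x. prod (f x) (g x))"
proof -
  obtain K where K: "K > 0" "\<And>a b. norm (prod a b) \<le> norm a * norm b * K"
    using pos_bounded by blast
  obtain Bf where Bf: "Bf > 0" "\<forall>z\<in>f ` S. norm z \<le> Bf"
    using assms(3) bounded_pos by blast
  obtain Bg where Bg: "Bg > 0" "\<forall>z\<in>g ` S. norm z \<le> Bg"
    using assms(4) bounded_pos by blast
  have "dist (prod (f x) (g x)) (prod (f y) (g y)) \<le> K * (Lf * Bg + Bf * Lg) * dist x y"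
    if "x \<in> S" "y \<in> S" for x y
  proof -
    have "prod (f x) (g x) - prod (f y) (g y) = prod (f x - f y) (g x) + prod (f y) (g x - g y)"
      by (simp add: diff_left diff_right)
    then have "norm (prod (f x) (g x) - prod (f y) (g y))
        \<le> norm (prod (f x - f y) (g x)) + norm (prod (f y) (g x - g y))"
      by (metis norm_triangle_ineq)
    also have "\<dots> \<le> norm (f x - f y) * norm (g x) * K + norm (f y) * norm (g x - g y) * K"
      by (intro add_mono K(2))
    also have "\<dots> \<le> (Lf * dist x y) * Bg * K + Bf * (Lg * dist x y) * K"
    proof -
      have "norm (f x - f y) * norm (g x) \<le> (Lf * dist x y) * Bg"
        using lipschitz_onD[OF f that] lipschitz_on_nonneg[OF f] Bg that
        by (intro mult_mono) (simp_all add: dist_norm)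
      moreover have "norm (f y) * norm (g x - g y) \<le> Bf * (Lg * dist x y)"
        using lipschitz_onD[OF g that] Bf that
        by (intro mult_mono) (simp_all add: dist_norm)
      ultimately show ?thesis
        using K(1) by (intro add_mono mult_right_mono) simp_all
    qed
    also have "\<dots> = K * (Lf * Bg + Bf * Lg) * dist x y"
      by (simp add: algebra_simps)
    finally show ?thesis
      by (simp add: dist_norm)
  qed
  moreover have "0 \<le> K * (Lf * Bg + Bf * Lg)"
    using K Bf Bg lipschitz_on_nonneg[OF f] lipschitz_on_nonneg[OF g] by simp
  ultimately show ?thesis
    by (intro that lipschitz_onI)
qed

lemma (in bounded_bilinear) locally_lipschitz_prod:
  assumes "locally_lipschitz f" "locally_lipschitz g"
  shows "locally_lipschitz (\<lambda>x. prod (f x) (g x))"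
  unfolding locally_lipschitz_def
proof
  fix x
  obtain e1 e2 Lf Lg where e: "e1 > 0" "e2 > 0"
    and "Lf-lipschitz_on (ball x e1) f" "Lg-lipschitz_on (ball x e2) g"
    using assms unfolding locally_lipschitz_def by metis
  then have f: "Lf-lipschitz_on (ball x (min e1 e2)) f" and g: "Lg-lipschitz_on (ball x (min e1 e2)) g"
    by (auto elim!: lipschitz_on_subset)
  obtain L where "L-lipschitz_on (ball x (min e1 e2)) (\<lambda>x. prod (f x) (g x))"
    by (rule lipschitz_on_prod[OF f g bounded_image_if_lipschitz_on[OF f] bounded_image_if_lipschitz_on[OF g]])
      auto
  then show "\<exists>e>0. \<exists>L. L-lipschitz_on (ball x e) (\<lambda>x. prod (f x) (g x))"
    using e by (metis min_less_iff_conj)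
qed

lemma locally_lipschitz_add:
  fixes f g :: "'a::metric_space \<Rightarrow> 'b::real_normed_vector"
  assumes "locally_lipschitz f" "locally_lipschitz g"
  shows "locally_lipschitz (\<lambda>x. f x + g x)"
  unfolding locally_lipschitz_def
proof
  fix x
  obtain e1 e2 Lf Lg where e: "e1 > 0" "e2 > 0"
    and "Lf-lipschitz_on (ball x e1) f" "Lg-lipschitz_on (ball x e2) g"
    using assms unfolding locally_lipschitz_def by metis
  then have "(Lf + Lg)-lipschitz_on (ball x (min e1 e2)) (\<lambda>x. f x + g x)"
    by (intro lipschitz_on_add) (auto elim!: lipschitz_on_subset)
  then show "\<exists>e>0. \<exists>L. L-lipschitz_on (ball x e) (\<lambda>x. f x + g x)"
    using e by (metis min_less_iff_conj)
qed

lemma C1_on_if_C2_on: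
  assumes "C2_on S F"
  shows "C1_on S F"
proof -
  obtain F' F'' where "\<forall>x\<in>S. (F has_derivative blinfun_apply (F' x)) (at x)"
    and "\<forall>x\<in>S. (F' has_derivative blinfun_apply (F'' x)) (at x)"
    using assms unfolding C2_on_def C1_on_def by blast
  then show ?thesis
    unfolding C1_on_def by (meson continuous_at_imp_continuous_on has_derivative_continuous)
qed

lemma locally_lipschitz_if_C1_on:
  fixes F :: "'a::euclidean_space \<Rightarrow> 'b::real_normed_vector"
  assumes "C1_on UNIV F"
  shows "locally_lipschitz F"
  unfolding locally_lipschitz_def
proof
  fix x
  obtain F' where F': "\<And>x. (F has_derivative blinfun_apply (F' x)) (at x)" "continuous_on UNIV F'"
    using assms unfolding C1_on_def by blast
  have "compact (F' ` cball x 1)"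
    by (rule compact_continuous_image[OF continuous_on_subset[OF F'(2)]]) auto
  then obtain B where B: "B > 0" "\<forall>z\<in>F' ` cball x 1. norm z \<le> B"
    using compact_imp_bounded bounded_pos by blast
  have "B-lipschitz_on (ball x 1) F"
  proof (rule bounded_derivative_imp_lipschitz)
    fix y assume "y \<in> ball x 1"
    show "(F has_derivative blinfun_apply (F' y)) (at y within ball x 1)"
      using F'(1) by (rule has_derivative_at_withinI)
    show "onorm (blinfun_apply (F' y)) \<le> B"
      using B(2) \<open>y \<in> ball x 1\<close> by (simp flip: norm_blinfun.rep_eq)
  qed (use B in auto)
  then show "\<exists>e>0. \<exists>L. L-lipschitz_on (ball x e) F"
    by (meson zero_less_one)
qed

lemma lipschitz_on_closest_point_extension:
  fixes F :: "'a::euclidean_space \<Rightarrow> 'b::metric_space"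
  assumes F: "L-lipschitz_on K F" and K: "closed K" "convex K" "K \<noteq> {}"
  shows "L-lipschitz_on UNIV (\<lambda>z. F (closest_point K z))"
proof (rule lipschitz_onI)
  fix x y :: 'a
  have "dist (F (closest_point K x)) (F (closest_point K y)) \<le> L * dist (closest_point K x) (closest_point K y)"
    using K by (intro lipschitz_onD[OF F] closest_point_in_set) auto
  also have "\<dots> \<le> L * dist x y"
    using closest_point_lipschitz[OF K(2,1,3)] lipschitz_on_nonneg[OF F] by (rule mult_left_mono)
  finally show "dist (F (closest_point K x)) (F (closest_point K y)) \<le> L * dist x y" .
qed (rule lipschitz_on_nonneg[OF F])

lemma lipschitz_extension_from_tube:
  fixes F :: "'a::euclidean_space \<Rightarrow> 'b::metric_space"
  assumes \<eta>: "compact \<eta>" "\<eta> \<noteq> {}" and F: "locally_lipschitz F" and "0 < r"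
  obtains L G where "L-lipschitz_on UNIV G" "L-lipschitz_on (tube \<eta> r) F" "\<forall>z\<in>tube \<eta> r. G z = F z"
proof -
  define K where "K = convex hull {z. infdist z \<eta> \<le> r}"
  have tube_K: "tube \<eta> r \<subseteq> K"
    using hull_subset[of "{z. infdist z \<eta> \<le> r}" convex] by (force simp: K_def tube_def)
  have "compact K" "convex K"
    unfolding K_def by (simp_all add: compact_convex_hull compact_infdist_le[OF \<eta>(2,1) \<open>0 < r\<close>])
  moreover have "K \<noteq> {}"
    using tube_K \<eta>(2) \<open>0 < r\<close> by (auto simp: tube_def)
  moreover obtain L where L: "L-lipschitz_on K F"
    using lipschitz_on_compact_if_locally_lipschitz[OF F \<open>compact K\<close>] by blast
  ultimately have "L-lipschitz_on UNIV (\<lambda>z. F (closest_point K z))"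
    by (intro lipschitz_on_closest_point_extension) (auto intro: compact_imp_closed)
  moreover have "\<forall>z\<in>tube \<eta> r. F (closest_point K z) = F z"
    using tube_K by (auto simp: closest_point_self)
  ultimately show ?thesis
    using that lipschitz_on_subset[OF L tube_K] by blast
qed

lemma bounded_bilinear_matrix_vector_mult:
  "bounded_bilinear ((*v) :: real^'m^'n \<Rightarrow> real^'m \<Rightarrow> real^'n)"
proof -
  have "bilinear ((*v) :: real^'m^'n \<Rightarrow> real^'m \<Rightarrow> real^'n)"
    unfolding bilinear_def
    by (auto simp: linear_iff algebra_simps matrix_vector_mult_def vec_eq_iff sum_distrib_left
        mult.assoc sum.distrib)
  then show ?thesis
    using bilinear_conv_bounded_bilinear by blast
qed

section \<open>Gronwall's inequality and solutions of Lipschitz fields\<close>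

lemma gronwall_inequality:
  fixes w :: "real \<Rightarrow> real"
  assumes cw: "continuous_on {0..b} w" and a: "0 \<le> a" and K: "0 \<le> K"
    and le: "\<And>t. t \<in> {0..b} \<Longrightarrow> w t \<le> a + K * integral {0..t} w"
    and t: "t \<in> {0..b}"
  shows "w t \<le> a * exp (K * t)"
proof -
  define v where "v s = exp (- K * s) * (a + K * integral {0..s} w)" for s
  define v' where "v' s = K * exp (- K * s) * (w s - a - K * integral {0..s} w)" for s
  have dI: "((\<lambda>u. integral {0..u} w) has_field_derivative w s) (at s within {0..t})"
    if "s \<in> {0..t}" for s
  proof -
    have "((\<lambda>u. integral {0..u} w) has_vector_derivative w s) (at s within {0..b})"
      by (rule integral_has_vector_derivative[OF cw]) (use that t in auto)
    then have "((\<lambda>u. integral {0..u} w) has_field_derivative w s) (at s within {0..b})"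
      by (simp add: has_real_derivative_iff_has_vector_derivative)
    then show ?thesis
      by (rule DERIV_subset) (use t in auto)
  qed
  have dv: "(v has_field_derivative v' s) (at s within {0..t})" if "s \<in> {0..t}" for s
    unfolding v_def v'_def
    by (rule derivative_eq_intros dI[OF that] refl | simp)+ (simp add: algebra_simps)
  have v'_nonpos: "v' s \<le> 0" if "s \<in> {0..t}" for s
    using le[of s] that t K by (auto simp: v'_def intro!: mult_nonneg_nonpos)
  have "\<exists>s\<in>{0..t}. v t - v 0 = v' s * (t - 0)"
    by (rule mvt_very_simple) (use t dv in \<open>auto simp: has_field_derivative_def\<close>)
  then obtain s where "s \<in> {0..t}" "v t - v 0 = v' s * (t - 0)"
    by blast
  with v'_nonpos t have "v t \<le> v 0"
    by (smt (verit) atLeastAtMost_iff mult_nonpos_nonneg)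
  then have "a + K * integral {0..t} w \<le> a * exp (K * t)"
    by (simp add: v_def exp_minus field_simps)
  with le[OF t] show ?thesis
    by linarith
qed

lemma norm_diff_le_of_derivative_bound:
  fixes x y :: "real \<Rightarrow> 'a::banach"
  assumes x: "\<forall>v\<in>{0..\<tau>}. (x has_vector_derivative x' v) (at v within {0..\<tau>})"
    and y: "\<forall>v\<in>{0..\<tau>}. (y has_vector_derivative y' v) (at v within {0..\<tau>})"
    and xy0: "x 0 = y 0" and "0 \<le> a" "0 \<le> K"
    and bound: "\<forall>v\<in>{0..\<tau>}. norm (x' v - y' v) \<le> a + K * norm (x v - y v)"
    and u: "u \<in> {0..\<tau>}"
  shows "norm (x u - y u) \<le> a * \<tau> * exp (K * u)"
proof -
  define w where "w v = norm (x v - y v)" for v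
  have "continuous_on {0..\<tau>} x" "continuous_on {0..\<tau>} y"
    using x y by (meson continuous_on_eq_continuous_within has_vector_derivative_continuous)+
  then have w_cont: "continuous_on {0..\<tau>} w"
    unfolding w_def by (intro continuous_intros)
  have "w t \<le> a * \<tau> + K * integral {0..t} w" if t: "t \<in> {0..\<tau>}" for t
  proof -
    have sub: "{0..t} \<subseteq> {0..\<tau>}"
      using t by auto
    have "((\<lambda>v. x' v - y' v) has_integral (x t - y t) - (x 0 - y 0)) {0..t}"
      using t x y
      by (intro fundamental_theorem_of_calculus has_vector_derivative_diff)
        (auto intro: has_vector_derivative_within_subset[OF _ sub])
    then have I: "((\<lambda>v. x' v - y' v) has_integral (x t - y t)) {0..t}"
      by (simp add: xy0)
    have w_int: "w integrable_on {0..t}"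
      by (rule integrable_continuous_interval[OF continuous_on_subset[OF w_cont sub]])
    have bound_int: "(\<lambda>v. a + K * w v) integrable_on {0..t}"
      by (rule integrable_continuous_interval)
        (intro continuous_intros continuous_on_subset[OF w_cont sub])
    have "w t = norm (integral {0..t} (\<lambda>v. x' v - y' v))"
      using integral_unique[OF I] by (simp add: w_def)
    also have "\<dots> \<le> integral {0..t} (\<lambda>v. a + K * w v)"
      using bound sub
      by (intro integral_norm_bound_integral[OF has_integral_integrable[OF I] bound_int])
        (auto simp: w_def)
    also have "\<dots> = integral {0..t} (\<lambda>v. a) + integral {0..t} (\<lambda>v. K * w v)"
      using w_int by (intro integral_add integrable_on_mult_right) auto
    also have "\<dots> = a * t + K * integral {0..t} w"
      using t by simp
    also have "\<dots> \<le> a * \<tau> + K * integral {0..t} w"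
      using t \<open>0 \<le> a\<close> by (simp add: mult_left_mono)
    finally show ?thesis .
  qed
  then show ?thesis
    using gronwall_inequality[OF w_cont _ \<open>0 \<le> K\<close> _ u] u \<open>0 \<le> a\<close> by (simp add: w_def)
qed

lemma has_integral_scaled_exp:
  fixes c u :: real
  assumes "0 \<le> u"
  shows "((\<lambda>s. c * exp (c * s)) has_integral exp (c * u) - 1) {0..u}"
proof -
  have "((\<lambda>s. c * exp (c * s)) has_integral exp (c * u) - exp (c * 0)) {0..u}"
  proof (rule fundamental_theorem_of_calculus[OF assms])
    fix s :: real
    show "((\<lambda>s. exp (c * s)) has_vector_derivative c * exp (c * s)) (at s within {0..u})"
      unfolding has_real_derivative_iff_has_vector_derivative[symmetric]
      by (rule derivative_eq_intros refl | simp)+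
  qed
  then show ?thesis
    by simp
qed

lemma bielecki_integral_contraction:
  fixes G :: "'a::euclidean_space \<Rightarrow> 'a" and \<phi> \<psi> :: "real \<Rightarrow> 'a"
  assumes G: "L-lipschitz_on UNIV G"
    and cont: "continuous_on {0..u} \<phi>" "continuous_on {0..u} \<psi>"
    and D: "\<forall>s\<in>{0..u}. norm (\<phi> s - \<psi> s) \<le> D" and u: "0 \<le> u"
  shows "exp (- 2 * L * u) * norm (integral {0..u} (\<lambda>s. G (exp (2 * L * s) *\<^sub>R \<phi> s))
           - integral {0..u} (\<lambda>s. G (exp (2 * L * s) *\<^sub>R \<psi> s))) \<le> D / 2"
proof -
  define I where "I \<gamma> = integral {0..u} (\<lambda>s. G (exp (2 * L * s) *\<^sub>R \<gamma> s))" for \<gamma>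
  have "0 \<le> L" "0 \<le> D"
    using lipschitz_on_nonneg[OF G] D u by (auto intro: order_trans[OF norm_ge_zero])
  have int: "(\<lambda>s. G (exp (2 * L * s) *\<^sub>R \<gamma> s)) integrable_on {0..u}"
    if "continuous_on {0..u} \<gamma>" for \<gamma>
  proof (rule integrable_continuous_interval)
    show "continuous_on {0..u} (\<lambda>s. G (exp (2 * L * s) *\<^sub>R \<gamma> s))"
      by (rule continuous_on_compose2[OF lipschitz_on_continuous_on[OF G],
            of _ "\<lambda>s. exp (2 * L * s) *\<^sub>R \<gamma> s"]) (auto intro!: continuous_intros that)
  qed
  have pointwise: "norm (G (exp (2 * L * s) *\<^sub>R \<phi> s) - G (exp (2 * L * s) *\<^sub>R \<psi> s))
      \<le> L * exp (2 * L * s) * D" if "s \<in> {0..u}" for s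
  proof -
    have "norm (G (exp (2 * L * s) *\<^sub>R \<phi> s) - G (exp (2 * L * s) *\<^sub>R \<psi> s))
        \<le> L * norm (exp (2 * L * s) *\<^sub>R \<phi> s - exp (2 * L * s) *\<^sub>R \<psi> s)"
      using lipschitz_onD[OF G, of "exp (2 * L * s) *\<^sub>R \<phi> s" "exp (2 * L * s) *\<^sub>R \<psi> s"]
      by (simp add: dist_norm)
    also have "\<dots> = L * (exp (2 * L * s) * norm (\<phi> s - \<psi> s))"
      by (simp flip: scaleR_diff_right)
    also have "\<dots> \<le> L * exp (2 * L * s) * D"
      using D that \<open>0 \<le> L\<close> unfolding mult.assoc by (intro mult_left_mono) auto
    finally show ?thesis .
  qed
  have weight: "((\<lambda>s. L * exp (2 * L * s) * D) has_integral (exp (2 * L * u) - 1) * (D / 2)) {0..u}"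
    using has_integral_mult_left[OF has_integral_scaled_exp[OF u, of "2 * L"], of "D / 2"]
    by (simp add: algebra_simps)
  have "norm (I \<phi> - I \<psi>)
      = norm (integral {0..u} (\<lambda>s. G (exp (2 * L * s) *\<^sub>R \<phi> s) - G (exp (2 * L * s) *\<^sub>R \<psi> s)))"
    by (simp add: I_def integral_diff[OF int[OF cont(1)] int[OF cont(2)]])
  also have "\<dots> \<le> integral {0..u} (\<lambda>s. L * exp (2 * L * s) * D)"
    by (rule integral_norm_bound_integral[OF integrable_diff[OF int[OF cont(1)] int[OF cont(2)]]
          has_integral_integrable[OF weight] pointwise])
  also have "\<dots> = (exp (2 * L * u) - 1) * (D / 2)"
    by (rule integral_unique[OF weight])
  finally have "exp (- 2 * L * u) * norm (I \<phi> - I \<psi>) \<le> exp (- 2 * L * u) * ((exp (2 * L * u) - 1) * (D / 2))"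
    by (simp add: mult_left_mono)
  also have "\<dots> = D / 2 - exp (- 2 * L * u) * (D / 2)"
    by (simp add: algebra_simps flip: exp_add)
  also have "\<dots> \<le> D / 2"
    using \<open>0 \<le> D\<close> by simp
  finally show ?thesis
    by (simp add: I_def)
qed

lemma ext_cont_in_bcontfun:
  fixes f :: "'a::euclidean_space \<Rightarrow> 'b::metric_space"
  assumes "continuous_on (cbox a b) f"
  shows "ext_cont f a b \<in> bcontfun"
proof -
  have "bounded (range (ext_cont f a b))"
    unfolding ext_cont_def
    using assms by (intro clamp_bounded compact_imp_bounded compact_continuous_image) auto
  moreover have "continuous_on UNIV (ext_cont f a b)"
    using assms by (rule continuous_on_ext_cont)
  ultimately show ?thesis
    unfolding bcontfun_def by simp
qed

lemma has_vector_derivative_if_integral_equation: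
  fixes G :: "'a::banach \<Rightarrow> 'a"
  assumes G: "continuous_on UNIV G" and y: "continuous_on {0..\<tau>} y"
    and eq: "\<And>t. t \<in> {0..\<tau>} \<Longrightarrow> y t = x0 + integral {0..t} (\<lambda>s. G (y s))"
    and t: "t \<in> {0..\<tau>}"
  shows "(y has_vector_derivative G (y t)) (at t within {0..\<tau>})"
proof (rule has_vector_derivative_transform[OF t eq])
  have "continuous_on {0..\<tau>} (\<lambda>s. G (y s))"
    using G y by (rule continuous_on_compose2) auto
  then show "((\<lambda>s. x0 + integral {0..s} (\<lambda>s. G (y s))) has_vector_derivative G (y t)) (at t within {0..\<tau>})"
    using t by (auto intro!: derivative_eq_intros integral_has_vector_derivative)
qed

lemma lipschitz_ode_solution_exists:
  fixes G :: "'a::euclidean_space \<Rightarrow> 'a"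
  assumes G: "L-lipschitz_on UNIV G" and \<tau>: "0 \<le> \<tau>"
  shows "\<exists>y. y 0 = x0 \<and> (\<forall>t\<in>{0..\<tau>}. (y has_vector_derivative G (y t)) (at t within {0..\<tau>}))"
proof -
  txt \<open>Picard iteration for \<psi> t = exp (- 2 * L * t) y t, extended to all of \<real> by clamping:
    in this weighted sup norm (Bielecki's) the Picard map is a contraction on the whole window.\<close>
  define \<Phi> where "\<Phi> \<psi> u = exp (- 2 * L * u) *\<^sub>R (x0 + integral {0..u} (\<lambda>s. G (exp (2 * L * s) *\<^sub>R \<psi> s)))"
    for \<psi> :: "real \<Rightarrow> 'a" and u
  have G_cont: "continuous_on UNIV G"
    using G by (rule lipschitz_on_continuous_on)
  have "continuous_on {0..\<tau>} (\<Phi> \<psi>)" for \<psi> :: "real \<Rightarrow>\<^sub>C 'a"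
    unfolding \<Phi>_def
    by (intro continuous_intros indefinite_integral_continuous_1 integrable_continuous_interval
        continuous_on_compose2[OF G_cont]) auto
  then have \<Phi>_bcontfun: "ext_cont (\<Phi> \<psi>) 0 \<tau> \<in> bcontfun" for \<psi> :: "real \<Rightarrow>\<^sub>C 'a"
    by (intro ext_cont_in_bcontfun) simp
  define Q where "Q \<psi> = Bcontfun (ext_cont (\<Phi> (apply_bcontfun \<psi>)) 0 \<tau>)" for \<psi> :: "real \<Rightarrow>\<^sub>C 'a"
  have Q_apply: "apply_bcontfun (Q \<psi>) t = \<Phi> \<psi> (clamp 0 \<tau> t)" for \<psi> t
    unfolding Q_def Bcontfun_inverse[OF \<Phi>_bcontfun] by (simp add: ext_cont_def)
  have clamp: "clamp 0 \<tau> t \<in> {0..\<tau>}" for t :: real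
    using \<tau> clamp_in_interval[of 0 \<tau> t] by simp
  have "dist (Q \<psi>1) (Q \<psi>2) \<le> 1/2 * dist \<psi>1 \<psi>2" for \<psi>1 \<psi>2
  proof (rule dist_bound)
    fix t
    define u where "u = clamp 0 \<tau> t"
    have "dist (apply_bcontfun (Q \<psi>1) t) (apply_bcontfun (Q \<psi>2) t)
        = exp (- 2 * L * u) * norm (integral {0..u} (\<lambda>s. G (exp (2 * L * s) *\<^sub>R \<psi>1 s))
            - integral {0..u} (\<lambda>s. G (exp (2 * L * s) *\<^sub>R \<psi>2 s)))"
      by (simp add: Q_apply \<Phi>_def dist_norm u_def flip: scaleR_diff_right)
    also have "\<dots> \<le> dist \<psi>1 \<psi>2 / 2"
      using clamp[of t] dist_bounded[of \<psi>1 _ \<psi>2]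
      by (intro bielecki_integral_contraction[OF G]) (auto simp: u_def dist_norm)
    finally show "dist (apply_bcontfun (Q \<psi>1) t) (apply_bcontfun (Q \<psi>2) t) \<le> 1/2 * dist \<psi>1 \<psi>2"
      by simp
  qed
  then obtain \<psi> where fixed: "Q \<psi> = \<psi>"
    using banach_fix_type[of "1/2" Q] by auto
  define y where "y t = exp (2 * L * t) *\<^sub>R apply_bcontfun \<psi> t" for t
  have y_eq: "y t = x0 + integral {0..t} (\<lambda>s. G (y s))" if "t \<in> {0..\<tau>}" for t
    using Q_apply[of \<psi> t] that by (simp add: fixed y_def \<Phi>_def clamp_cancel_cbox flip: exp_add)
  have "continuous_on {0..\<tau>} y"
    unfolding y_def by (intro continuous_intros) auto
  then have "\<forall>t\<in>{0..\<tau>}. (y has_vector_derivative G (y t)) (at t within {0..\<tau>})"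
    using has_vector_derivative_if_integral_equation[OF G_cont _ y_eq] by blast
  moreover have "y 0 = x0"
    using y_eq[of 0] \<tau> by simp
  ultimately show ?thesis
    by blast
qed

section \<open>Maps of order o(infdist x \<eta>)\<close>

definition little_o_infdist :: "'a::metric_space set \<Rightarrow> ('a \<Rightarrow> 'b::real_normed_vector) \<Rightarrow> bool" where
  "little_o_infdist \<eta> h \<longleftrightarrow> (\<forall>\<epsilon>>0. \<exists>r>0. \<forall>z\<in>tube \<eta> r. norm (h z) \<le> \<epsilon> * infdist z \<eta>)"

lemma little_o_infdist_if_flat:
  fixes h :: "'a::euclidean_space \<Rightarrow> 'b::real_normed_vector"
  assumes E: "compact E" "E \<noteq> {}"
    and h': "\<And>x. (h has_derivative blinfun_apply (h' x)) (at x)" "continuous_on UNIV h'"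
    and flat: "\<And>y. y \<in> E \<Longrightarrow> h y = 0 \<and> h' y = 0"
  shows "little_o_infdist E h"
  unfolding little_o_infdist_def
proof (intro allI impI)
  fix \<epsilon> :: real assume "0 < \<epsilon>"
  have "open {z. norm (h' z) < \<epsilon>}"
    by (intro open_Collect_less continuous_intros h'(2))
  moreover have "E \<subseteq> {z. norm (h' z) < \<epsilon>}"
    using flat \<open>0 < \<epsilon>\<close> by auto
  ultimately obtain r where r: "0 < r" "{z. infdist z E \<le> r} \<subseteq> {z. norm (h' z) < \<epsilon>}"
    by (rule compact_in_open_separated[OF E(2,1)])
  show "\<exists>r>0. \<forall>z\<in>tube E r. norm (h z) \<le> \<epsilon> * infdist z E"
  proof (intro exI[of _ r] conjI ballI r(1))
    fix x assume "x \<in> tube E r"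
    obtain p where p: "p \<in> E" "infdist x E = dist x p"
      using infdist_attains_inf[OF compact_imp_closed[OF E(1)] E(2)] by blast
    have segment: "norm (h' z) < \<epsilon>" if "z \<in> closed_segment p x" for z
    proof -
      have "infdist z E \<le> dist z p"
        using infdist_le[OF p(1)] .
      also have "\<dots> \<le> dist x p"
        using dist_in_closed_segment[OF that] by (simp add: dist_commute)
      also have "\<dots> < r"
        using \<open>x \<in> tube E r\<close> p(2) by (simp add: tube_def)
      finally have "z \<in> {z. infdist z E \<le> r}"
        by simp
      then show ?thesis
        using r(2) by blast
    qed
    have "norm (h x - h p) \<le> \<epsilon> * norm (x - p)"
    proof (rule differentiable_bound[where f'="\<lambda>z. blinfun_apply (h' z)" and S="closed_segment p x"])
      show "(h has_derivative blinfun_apply (h' z)) (at z within closed_segment p x)" for z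
        using h'(1) by (rule has_derivative_at_withinI)
      show "onorm (blinfun_apply (h' z)) \<le> \<epsilon>" if "z \<in> closed_segment p x" for z
        using segment[OF that] by (simp flip: norm_blinfun.rep_eq)
    qed simp_all
    then show "norm (h x) \<le> \<epsilon> * infdist x E"
      using flat[OF p(1)] p(2) by (simp add: dist_norm)
  qed
qed

lemma little_o_infdist_diff_if_tangent:
  fixes h k :: "'a::euclidean_space \<Rightarrow> 'b::real_normed_vector"
  assumes E: "compact E" "E \<noteq> {}" and "C1_on UNIV h" "C1_on UNIV k"
    and tangent: "\<forall>y\<in>E. h y = k y \<and> frechet_derivative h (at y) = frechet_derivative k (at y)"
  shows "little_o_infdist E (\<lambda>x. h x - k x)"
proof -
  obtain h' k' where h': "\<And>x. (h has_derivative blinfun_apply (h' x)) (at x)" "continuous_on UNIV h'"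
    and k': "\<And>x. (k has_derivative blinfun_apply (k' x)) (at x)" "continuous_on UNIV k'"
    using assms(3,4) unfolding C1_on_def by blast
  have "((\<lambda>x. h x - k x) has_derivative blinfun_apply (h' x - k' x)) (at x)" for x
    using has_derivative_diff[OF h'(1) k'(1)] by (simp add: blinfun.diff_left[abs_def])
  moreover have "h' y - k' y = 0" if "y \<in> E" for y
  proof -
    have "blinfun_apply (h' y) = blinfun_apply (k' y)"
      using tangent that frechet_derivative_at[OF h'(1)] frechet_derivative_at[OF k'(1)] by simp
    then show ?thesis
      by (simp add: blinfun_apply_inject)
  qed
  ultimately show ?thesis
    using tangent h'(2) k'(2)
    by (intro little_o_infdist_if_flat[where h'="\<lambda>x. h' x - k' x", OF E]) (auto intro: continuous_intros)
qed

lemma (in bounded_bilinear) little_o_infdist_prod: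
  fixes g :: "'d::euclidean_space \<Rightarrow> 'a"
  assumes E: "compact E" "E \<noteq> {}" and g: "continuous_on UNIV g" and h: "little_o_infdist E h"
  shows "little_o_infdist E (\<lambda>x. prod (g x) (h x))"
  unfolding little_o_infdist_def
proof (intro allI impI)
  fix \<epsilon> :: real assume "0 < \<epsilon>"
  obtain K where K: "0 < K" "\<And>a b. norm (prod a b) \<le> norm a * norm b * K"
    using pos_bounded by blast
  have "compact (g ` {z. infdist z E \<le> 1})"
    by (rule compact_continuous_image[OF continuous_on_subset[OF g] compact_infdist_le[OF E(2,1)]]) auto
  then obtain B where B: "0 < B" "\<forall>y\<in>g ` {z. infdist z E \<le> 1}. norm y \<le> B"
    using compact_imp_bounded bounded_pos by blast
  have "0 < \<epsilon> / (B * K)"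
    using \<open>0 < \<epsilon>\<close> B(1) K(1) by simp
  then obtain r where r: "0 < r" "\<forall>z\<in>tube E r. norm (h z) \<le> \<epsilon> / (B * K) * infdist z E"
    using h unfolding little_o_infdist_def by blast
  show "\<exists>r>0. \<forall>z\<in>tube E r. norm (prod (g z) (h z)) \<le> \<epsilon> * infdist z E"
  proof (intro exI[of _ "min r 1"] conjI ballI)
    fix z assume z: "z \<in> tube E (min r 1)"
    have "norm (prod (g z) (h z)) \<le> norm (g z) * norm (h z) * K"
      by (rule K(2))
    also have "\<dots> \<le> B * (\<epsilon> / (B * K) * infdist z E) * K"
    proof -
      have "norm (g z) \<le> B"
        using B(2) z by (simp add: tube_def)
      moreover have "norm (h z) \<le> \<epsilon> / (B * K) * infdist z E"
        using r(2) z by (simp add: tube_def)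
      ultimately show ?thesis
        using B(1) K(1) by (intro mult_right_mono mult_mono) simp_all
    qed
    also have "\<dots> = \<epsilon> * infdist z E"
      using B(1) K(1) by (simp add: field_simps)
    finally show "norm (prod (g z) (h z)) \<le> \<epsilon> * infdist z E" .
  qed (use r(1) in simp)
qed

section \<open>Perturbations of exponentially orbitally stable fields\<close>

lemma halving_windows_bound:
  fixes w :: "real \<Rightarrow> real"
  assumes \<tau>: "0 < \<tau>" and "0 \<le> M"
    and halve: "\<forall>s\<ge>t0. w (s + \<tau>) \<le> w s / 2"
    and window: "\<forall>s\<ge>t0. \<forall>u\<in>{0..\<tau>}. w (s + u) \<le> M * w s"
    and "t0 \<le> t"
  shows "w t \<le> M * ((1/2) ^ nat \<lfloor>(t - t0) / \<tau>\<rfloor> * w t0)"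
proof -
  have iterate: "w (t0 + real m * \<tau>) \<le> (1/2) ^ m * w t0" for m
  proof (induction m)
    case (Suc m)
    have "t0 \<le> t0 + real m * \<tau>"
      using \<tau> by simp
    then have "w (t0 + real m * \<tau> + \<tau>) \<le> w (t0 + real m * \<tau>) / 2"
      using halve by blast
    with Suc show ?case
      by (simp add: algebra_simps)
  qed simp
  define n where "n = nat \<lfloor>(t - t0) / \<tau>\<rfloor>"
  have "real n \<le> (t - t0) / \<tau>" "(t - t0) / \<tau> < real n + 1"
    using \<open>t0 \<le> t\<close> \<tau> by (simp_all add: n_def)
  then have u: "t - (t0 + real n * \<tau>) \<in> {0..\<tau>}"
    using \<tau> by (simp add: field_simps)
  have "t0 \<le> t0 + real n * \<tau>"
    using \<tau> by simp
  then have "w (t0 + real n * \<tau> + (t - (t0 + real n * \<tau>))) \<le> M * w (t0 + real n * \<tau>)"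
    using window u by blast
  also have "\<dots> \<le> M * ((1/2) ^ n * w t0)"
    using iterate \<open>0 \<le> M\<close> by (rule mult_left_mono)
  finally show ?thesis
    by (simp add: n_def)
qed

lemma tendsto_zero_if_halving_windows:
  fixes w :: "real \<Rightarrow> real"
  assumes \<tau>: "0 < \<tau>" and "0 \<le> M" and nonneg: "\<forall>t\<ge>t0. 0 \<le> w t"
    and halve: "\<forall>s\<ge>t0. w (s + \<tau>) \<le> w s / 2"
    and window: "\<forall>s\<ge>t0. \<forall>u\<in>{0..\<tau>}. w (s + u) \<le> M * w s"
  shows "(w \<longlongrightarrow> 0) at_top"
proof -
  define bound where "bound t = M * ((1/2) ^ nat \<lfloor>(t - t0) / \<tau>\<rfloor> * w t0)" for t
  have "filterlim (\<lambda>t. (t - t0) / \<tau>) at_top at_top"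
    unfolding filterlim_at_top eventually_at_top_linorder
    using \<tau> by (auto intro!: exI[of _ "t0 + _ * \<tau>"] simp: field_simps)
  then have "filterlim (\<lambda>t. nat \<lfloor>(t - t0) / \<tau>\<rfloor>) sequentially at_top"
    by (intro filterlim_compose[OF filterlim_nat_sequentially]
        filterlim_compose[OF filterlim_floor_sequentially])
  then have "(bound \<longlongrightarrow> 0) at_top"
    unfolding bound_def
    by (intro tendsto_mult_right_zero tendsto_mult_left_zero filterlim_compose[OF LIMSEQ_power_zero]) auto
  moreover have "eventually (\<lambda>t. 0 \<le> w t \<and> w t \<le> bound t) at_top"
    using nonneg halving_windows_bound[OF assms(1,2) halve window]
    by (intro eventually_at_top_linorderI[of t0]) (auto simp: bound_def)
  ultimately show ?thesis
    by (intro tendsto_sandwich[of "\<lambda>_. 0" w _ bound]) (auto elim: eventually_mono)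
qed

lemma has_vector_derivative_shifted_window:
  assumes x: "\<forall>t\<ge>t0. (x has_vector_derivative X t) (at t within {t0..})" and "t0 \<le> s"
  shows "\<forall>u\<in>{0..\<tau>}. ((\<lambda>u. x (s + u)) has_vector_derivative X (s + u)) (at u within {0..\<tau>})"
proof
  fix u :: real assume u: "u \<in> {0..\<tau>}"
  have "(x has_vector_derivative X (s + u)) (at (s + u) within (\<lambda>u. s + u) ` {0..\<tau>})"
    using u \<open>t0 \<le> s\<close>
    by (intro has_vector_derivative_within_subset[OF x[rule_format]]) auto
  moreover have "((\<lambda>u. s + u) has_vector_derivative 1) (at u within {0..\<tau>})"
    by (auto intro!: derivative_eq_intros)
  ultimately show "((\<lambda>u. x (s + u)) has_vector_derivative X (s + u)) (at u within {0..\<tau>})"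
    using vector_diff_chain_within[of "\<lambda>u. s + u" 1 u "{0..\<tau>}" x] by (simp add: o_def)
qed

lemma below_threshold_if_bounded_while_below:
  fixes d :: "real \<Rightarrow> real"
  assumes d: "continuous_on {0..\<tau>} d" and "d 0 < r" "M < r"
    and bounded: "\<And>b. b \<in> {0..\<tau>} \<Longrightarrow> \<forall>u\<in>{0..b}. d u < r \<Longrightarrow> d b \<le> M"
  shows "\<forall>u\<in>{0..\<tau>}. d u < r"
proof (rule ccontr)
  assume not_below: "\<not> (\<forall>u\<in>{0..\<tau>}. d u < r)"
  define S where "S = {u\<in>{0..\<tau>}. r \<le> d u}"
  have "S \<noteq> {}" "bdd_below S"
    using not_below by (auto simp: S_def not_less intro: bdd_belowI[of _ 0])
  moreover have "closed S"
    using continuous_closed_preimage[OF d closed_atLeastAtMost closed_atLeast, of r]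
    by (simp add: S_def vimage_def Int_def)
  ultimately have t1: "Inf S \<in> S"
    by (rule closed_contains_Inf)
  have below: "d u < r" if "u \<in> {0..<Inf S}" for u
    using that cInf_lower[OF _ \<open>bdd_below S\<close>, of u] t1 by (force simp: S_def)
  have "0 < Inf S"
    using t1 \<open>d 0 < r\<close> by (auto simp: S_def order.order_iff_strict)
  have "d (Inf S) \<le> M"
  proof (rule continuous_le_on_closure[of "{0..<Inf S}" d])
    show "continuous_on (closure {0..<Inf S}) d"
      using \<open>0 < Inf S\<close> t1 by (auto simp: S_def intro: continuous_on_subset[OF d])
    show "Inf S \<in> closure {0..<Inf S}"
      using \<open>0 < Inf S\<close> by simp
    show "d u \<le> M" if "u \<in> {0..<Inf S}" for u
      using that t1 below by (intro bounded) (auto simp: S_def)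
  qed
  then show False
    using t1 \<open>M < r\<close> by (simp add: S_def)
qed

definition exp_orbitally_stable_with ::
  "real \<Rightarrow> real \<Rightarrow> real \<Rightarrow> ('a::euclidean_space \<Rightarrow> 'a) \<Rightarrow> 'a set \<Rightarrow> bool" where
  "exp_orbitally_stable_with \<delta> C \<mu> F \<eta> \<longleftrightarrow>
     (\<forall>chi b. b \<ge> 0 \<and> (\<forall>t\<in>{0..b}. (chi has_vector_derivative F (chi t)) (at t within {0..b}))
        \<and> infdist (chi 0) \<eta> < \<delta>
        \<longrightarrow> (\<forall>t\<in>{0..b}. infdist (chi t) \<eta> \<le> C * exp (- \<mu> * t) * infdist (chi 0) \<eta>))"

lemma exp_orbitally_stable_iff_with:
  "exp_orbitally_stable F \<eta> \<longleftrightarrow> (\<exists>\<delta>>0. \<exists>C>0. \<exists>\<mu>>0. exp_orbitally_stable_with \<delta> C \<mu> F \<eta>)"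
  unfolding exp_orbitally_stable_def exp_orbitally_stable_with_def by blast

lemma exp_decay_of_locally_agreeing_field:
  assumes stab: "exp_orbitally_stable_with \<delta> C \<mu> F \<eta>" and "0 \<le> C" "0 \<le> \<mu>"
    and agree: "\<forall>z\<in>tube \<eta> r. G z = F z"
    and y: "\<forall>u\<in>{0..\<tau>}. (y has_vector_derivative G (y u)) (at u within {0..\<tau>})"
    and y0: "infdist (y 0) \<eta> < \<delta>" "infdist (y 0) \<eta> < r" "C * infdist (y 0) \<eta> < r"
  shows "\<forall>u\<in>{0..\<tau>}. (y has_vector_derivative F (y u)) (at u within {0..\<tau>})
    \<and> infdist (y u) \<eta> \<le> C * exp (- \<mu> * u) * infdist (y 0) \<eta>
    \<and> infdist (y u) \<eta> \<le> C * infdist (y 0) \<eta>"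
proof -
  have exp_le: "C * exp (- \<mu> * u) * infdist (y 0) \<eta> \<le> C * infdist (y 0) \<eta>" if "0 \<le> u" for u
    using that \<open>0 \<le> C\<close> \<open>0 \<le> \<mu>\<close> by (intro mult_right_mono mult_left_le infdist_nonneg) auto
  have solves_F: "\<forall>u\<in>{0..b}. (y has_vector_derivative F (y u)) (at u within {0..b})"
    if "b \<in> {0..\<tau>}" "\<forall>u\<in>{0..b}. infdist (y u) \<eta> < r" for b
  proof
    fix u assume u: "u \<in> {0..b}"
    then have "G (y u) = F (y u)"
      using agree that(2) by (auto simp: tube_def)
    moreover have "(y has_vector_derivative G (y u)) (at u within {0..\<tau>})"
      using y u that(1) by auto
    ultimately show "(y has_vector_derivative F (y u)) (at u within {0..b})"
      using that(1) by (auto elim: has_vector_derivative_within_subset)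
  qed
  have decay: "\<forall>u\<in>{0..b}. infdist (y u) \<eta> \<le> C * exp (- \<mu> * u) * infdist (y 0) \<eta>"
    if "b \<in> {0..\<tau>}" "\<forall>u\<in>{0..b}. infdist (y u) \<eta> < r" for b
    using stab solves_F[OF that] y0(1) that(1) unfolding exp_orbitally_stable_with_def by auto
  have "continuous_on {0..\<tau>} y"
    using y by (meson continuous_on_eq_continuous_within has_vector_derivative_continuous)
  have below: "\<forall>u\<in>{0..\<tau>}. infdist (y u) \<eta> < r"
  proof (rule below_threshold_if_bounded_while_below[where d="\<lambda>u. infdist (y u) \<eta>"
        and M="C * infdist (y 0) \<eta>"])
    show "continuous_on {0..\<tau>} (\<lambda>u. infdist (y u) \<eta>)"
      by (intro continuous_intros \<open>continuous_on {0..\<tau>} y\<close>)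
    show "infdist (y 0) \<eta> < r" "C * infdist (y 0) \<eta> < r"
      by (fact y0(2), fact y0(3))
    fix b assume "b \<in> {0..\<tau>}" "\<forall>u\<in>{0..b}. infdist (y u) \<eta> < r"
    then have "infdist (y b) \<eta> \<le> C * exp (- \<mu> * b) * infdist (y 0) \<eta>"
      using decay by auto
    also have "\<dots> \<le> C * infdist (y 0) \<eta>"
      using exp_le \<open>b \<in> {0..\<tau>}\<close> by simp
    finally show "infdist (y b) \<eta> \<le> C * infdist (y 0) \<eta>" .
  qed
  show ?thesis
  proof (intro ballI conjI)
    fix u assume u: "u \<in> {0..\<tau>}"
    then have "\<tau> \<in> {0..\<tau>}"
      by simp
    then show "(y has_vector_derivative F (y u)) (at u within {0..\<tau>})"
      using solves_F[of \<tau>] below u by blast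
    show u_decay: "infdist (y u) \<eta> \<le> C * exp (- \<mu> * u) * infdist (y 0) \<eta>"
      using decay[of \<tau>] below u \<open>\<tau> \<in> {0..\<tau>}\<close> by blast
    then show "infdist (y u) \<eta> \<le> C * infdist (y 0) \<eta>"
      using exp_le[of u] u by simp
  qed
qed

lemma norm_diff_perturbed_solution_le:
  fixes F P :: "'a::euclidean_space \<Rightarrow> 'a"
  assumes F: "L-lipschitz_on S F"
    and x: "\<forall>u\<in>{0..\<tau>}. (x has_vector_derivative P (x u)) (at u within {0..\<tau>})"
    and y: "\<forall>u\<in>{0..\<tau>}. (y has_vector_derivative F (y u)) (at u within {0..\<tau>})"
    and "x 0 = y 0" and in_S: "\<forall>u\<in>{0..\<tau>}. x u \<in> S \<and> y u \<in> S"
    and P: "\<forall>u\<in>{0..\<tau>}. norm (P (x u) - F (x u)) \<le> \<epsilon> * infdist (x u) \<eta>" and "0 \<le> \<epsilon>"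
    and M: "\<forall>u\<in>{0..\<tau>}. infdist (y u) \<eta> \<le> M" and u: "u \<in> {0..\<tau>}"
  shows "norm (x u - y u) \<le> \<epsilon> * M * \<tau> * exp ((L + \<epsilon>) * \<tau>)"
proof -
  have "0 \<in> {0..\<tau>}"
    using u by simp
  then have "0 \<le> M"
    using M infdist_nonneg[of "y 0" \<eta>] by (meson order_trans)
  then have "0 \<le> \<epsilon> * M" "0 \<le> L + \<epsilon>"
    using \<open>0 \<le> \<epsilon>\<close> lipschitz_on_nonneg[OF F] by simp_all
  have "norm (P (x v) - F (y v)) \<le> \<epsilon> * M + (L + \<epsilon>) * norm (x v - y v)" if v: "v \<in> {0..\<tau>}" for v
  proof -
    have "infdist (x v) \<eta> \<le> infdist (y v) \<eta> + norm (x v - y v)"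
      using infdist_triangle[of "x v" \<eta> "y v"] by (simp add: dist_norm)
    then have "norm (P (x v) - F (x v)) \<le> \<epsilon> * (M + norm (x v - y v))"
      using P M v \<open>0 \<le> \<epsilon>\<close> by (smt (verit) mult_left_mono)
    moreover have "norm (F (x v) - F (y v)) \<le> L * norm (x v - y v)"
      using lipschitz_onD[OF F] in_S v by (simp add: dist_norm)
    ultimately show ?thesis
      using norm_triangle_ineq[of "P (x v) - F (x v)" "F (x v) - F (y v)"]
      by (simp add: algebra_simps)
  qed
  then have "norm (x u - y u) \<le> \<epsilon> * M * \<tau> * exp ((L + \<epsilon>) * u)"
    using norm_diff_le_of_derivative_bound[OF x y \<open>x 0 = y 0\<close> \<open>0 \<le> \<epsilon> * M\<close> \<open>0 \<le> L + \<epsilon>\<close> _ u]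
    by blast
  also have "\<dots> \<le> \<epsilon> * M * \<tau> * exp ((L + \<epsilon>) * \<tau>)"
    using u \<open>0 \<le> \<epsilon> * M\<close> \<open>0 \<le> L + \<epsilon>\<close> by (auto intro!: mult_left_mono)
  finally show ?thesis .
qed

lemma infdist_halves_on_window:
  fixes F P G :: "'a::euclidean_space \<Rightarrow> 'a"
  assumes stab: "exp_orbitally_stable_with \<delta> C \<mu> F \<eta>" "0 < C" "0 < \<mu>"
    and F_lip: "L-lipschitz_on (tube \<eta> 1) F"
    and G_agree: "\<forall>z\<in>tube \<eta> 1. G z = F z"
    and G_sol: "\<exists>y. y 0 = x 0 \<and> (\<forall>u\<in>{0..\<tau>}. (y has_vector_derivative G (y u)) (at u within {0..\<tau>}))"
    and P_close: "\<forall>z\<in>tube \<eta> e. norm (P z - F z) \<le> \<epsilon> * infdist z \<eta>" and "0 \<le> \<epsilon>"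
    and x: "\<forall>u\<in>{0..\<tau>}. (x has_vector_derivative P (x u)) (at u within {0..\<tau>})"
    and x_near: "\<forall>u\<in>{0..\<tau>}. x u \<in> tube \<eta> e"
    and e: "e \<le> \<delta>" "e \<le> 1 / (2 * C + 2)"
    and \<tau>: "0 \<le> \<tau>" "C * exp (- \<mu> * \<tau>) \<le> 1/4" "\<epsilon> * C * \<tau> * exp ((L + \<epsilon>) * \<tau>) \<le> 1/4"
  shows "infdist (x \<tau>) \<eta> \<le> infdist (x 0) \<eta> / 2
    \<and> (\<forall>u\<in>{0..\<tau>}. infdist (x u) \<eta> \<le> (C + 1) * infdist (x 0) \<eta>)"
proof -
  define D where "D = infdist (x 0) \<eta>"
  have "(C + 1) * e \<le> (C + 1) * (1 / (2 * C + 2))"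
    using e(2) stab(2) by (intro mult_left_mono) auto
  also have "\<dots> = 1/2"
    using stab(2) by (simp add: field_simps)
  finally have "C * e + e \<le> 1/2"
    by (simp add: algebra_simps)
  moreover have "0 \<le> D" "D < e"
    using x_near \<tau>(1) infdist_nonneg[of "x 0" \<eta>] by (auto simp: D_def tube_def)
  moreover have "C * D < C * e" "0 \<le> C * e"
    using \<open>D < e\<close> \<open>0 \<le> D\<close> stab(2) by simp_all
  ultimately have D: "0 \<le> D" "D < \<delta>" "C * D < 1/2" "D < 1/2" and "e \<le> 1/2"
    using e(1) by linarith+
  obtain y where "y 0 = x 0" and y_G: "\<forall>u\<in>{0..\<tau>}. (y has_vector_derivative G (y u)) (at u within {0..\<tau>})"
    using G_sol by blast
  then have y: "\<forall>u\<in>{0..\<tau>}. (y has_vector_derivative F (y u)) (at u within {0..\<tau>})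
      \<and> infdist (y u) \<eta> \<le> C * exp (- \<mu> * u) * D \<and> infdist (y u) \<eta> \<le> C * D"
    using exp_decay_of_locally_agreeing_field[OF stab(1) _ _ G_agree y_G] stab(2,3) D
    by (simp add: D_def)
  then have y_near: "\<forall>u\<in>{0..\<tau>}. infdist (y u) \<eta> \<le> C * D"
    by blast
  have in_tube: "\<forall>u\<in>{0..\<tau>}. x u \<in> tube \<eta> 1 \<and> y u \<in> tube \<eta> 1"
    using x_near y_near D(3) \<open>e \<le> 1/2\<close> by (fastforce simp: tube_def)
  have x_bound: "infdist (x u) \<eta> \<le> infdist (y u) \<eta> + D / 4" if u: "u \<in> {0..\<tau>}" for u
  proof -
    have "norm (x u - y u) \<le> \<epsilon> * (C * D) * \<tau> * exp ((L + \<epsilon>) * \<tau>)"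
      using y P_close x_near
      by (intro norm_diff_perturbed_solution_le[OF F_lip x _ \<open>y 0 = x 0\<close>[symmetric] in_tube _
            \<open>0 \<le> \<epsilon>\<close> y_near u]) auto
    also have "\<dots> = (\<epsilon> * C * \<tau> * exp ((L + \<epsilon>) * \<tau>)) * D"
      by (simp add: algebra_simps)
    also have "\<dots> \<le> D / 4"
      using \<tau>(3) D(1) mult_right_mono by fastforce
    finally show ?thesis
      using infdist_triangle[of "x u" \<eta> "y u"] by (simp add: dist_norm)
  qed
  have "C * exp (- \<mu> * \<tau>) * D \<le> D / 4"
    using \<tau>(2) D(1) mult_right_mono by fastforce
  moreover have "infdist (x \<tau>) \<eta> \<le> infdist (y \<tau>) \<eta> + D / 4"
    using x_bound \<tau>(1) by simp
  moreover have "infdist (y \<tau>) \<eta> \<le> C * exp (- \<mu> * \<tau>) * D"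
    using y \<tau>(1) by simp
  ultimately have "infdist (x \<tau>) \<eta> \<le> D / 2"
    by linarith
  moreover have "infdist (x u) \<eta> \<le> (C + 1) * D" if "u \<in> {0..\<tau>}" for u
  proof -
    have "(C + 1) * D = C * D + D"
      by (simp add: algebra_simps)
    then show ?thesis
      using x_bound[OF that] y_near that D(1) by fastforce
  qed
  ultimately show ?thesis
    by (simp add: D_def)
qed

lemma window_parameters_exist:
  fixes C \<mu> L :: real
  assumes "0 < C" "0 < \<mu>" "0 \<le> L"
  obtains \<tau> \<epsilon> where "0 < \<tau>" "0 < \<epsilon>" "C * exp (- \<mu> * \<tau>) \<le> 1/4"
    "\<epsilon> * C * \<tau> * exp ((L + \<epsilon>) * \<tau>) \<le> 1/4"
proof -
  define \<tau> where "\<tau> = max 1 (ln (4 * C) / \<mu>)"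
  define \<epsilon> where "\<epsilon> = 1 / (4 * (C * \<tau> + 1) * exp ((L + 1) * \<tau>))"
  have "0 < \<tau>" "ln (4 * C) / \<mu> \<le> \<tau>"
    by (simp_all add: \<tau>_def)
  then have "0 < C * \<tau>" "ln (4 * C) \<le> \<mu> * \<tau>"
    using assms by (simp_all add: pos_divide_le_eq mult.commute)
  then have "exp (- \<mu> * \<tau>) \<le> exp (- ln (4 * C))"
    by simp
  then have "C * exp (- \<mu> * \<tau>) \<le> 1/4"
    using assms by (simp add: exp_minus field_simps)
  moreover have "0 < \<epsilon>" "\<epsilon> \<le> 1"
  proof -
    have "1 * 1 \<le> (C * \<tau> + 1) * exp ((L + 1) * \<tau>)"
      using assms \<open>0 < \<tau>\<close> by (intro mult_mono) auto
    then have "1 \<le> 4 * (C * \<tau> + 1) * exp ((L + 1) * \<tau>)"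
      by (simp only: mult.assoc)
    then show "0 < \<epsilon>" "\<epsilon> \<le> 1"
      unfolding \<epsilon>_def by (auto simp: divide_le_eq_1)
  qed
  moreover have "\<epsilon> * C * \<tau> * exp ((L + \<epsilon>) * \<tau>) \<le> \<epsilon> * C * \<tau> * exp ((L + 1) * \<tau>)"
    using assms \<open>0 < \<tau>\<close> \<open>0 < \<epsilon>\<close> \<open>\<epsilon> \<le> 1\<close> by (simp add: mult_left_mono)
  moreover have "\<epsilon> * C * \<tau> * exp ((L + 1) * \<tau>) = C * \<tau> / (4 * (C * \<tau> + 1))"
  proof -
    have "C * \<tau> + 1 \<noteq> 0"
      using \<open>0 < C * \<tau>\<close> by linarith
    then show ?thesis
      by (simp add: \<epsilon>_def)
  qed
  moreover have "C * \<tau> / (4 * (C * \<tau> + 1)) \<le> 1/4"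
    using \<open>0 < C * \<tau>\<close> by (simp add: field_simps)
  ultimately have "C * exp (- \<mu> * \<tau>) \<le> 1/4" "0 < \<epsilon>" "\<epsilon> * C * \<tau> * exp ((L + \<epsilon>) * \<tau>) \<le> 1/4"
    by linarith+
  then show ?thesis
    using that \<open>0 < \<tau>\<close> by blast
qed

theorem exp_orbitally_stable_perturbation_attracts:
  fixes F P :: "'a::euclidean_space \<Rightarrow> 'a"
  assumes \<eta>: "compact \<eta>" "\<eta> \<noteq> {}"
    and stable: "exp_orbitally_stable F \<eta>"
    and F_lip: "locally_lipschitz F"
    and P_close: "little_o_infdist \<eta> (\<lambda>z. P z - F z)"
  shows "\<exists>e>0. \<forall>x t0. (\<forall>t\<ge>t0. x t \<in> tube \<eta> e \<and> (x has_vector_derivative P (x t)) (at t within {t0..}))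
            \<longrightarrow> ((\<lambda>t. infdist (x t) \<eta>) \<longlongrightarrow> 0) at_top"
proof -
  obtain \<delta> C \<mu> where "0 < \<delta>" and C: "0 < C" and \<mu>: "0 < \<mu>"
    and stab: "exp_orbitally_stable_with \<delta> C \<mu> F \<eta>"
    using stable exp_orbitally_stable_iff_with by blast
  obtain L G where G_lip: "L-lipschitz_on UNIV G" and F_lip1: "L-lipschitz_on (tube \<eta> 1) F"
    and G_agree: "\<forall>z\<in>tube \<eta> 1. G z = F z"
    using lipschitz_extension_from_tube[OF \<eta> F_lip zero_less_one] by blast
  obtain \<tau> \<epsilon> where \<tau>: "0 < \<tau>" "C * exp (- \<mu> * \<tau>) \<le> 1/4"
    and \<epsilon>: "0 < \<epsilon>" "\<epsilon> * C * \<tau> * exp ((L + \<epsilon>) * \<tau>) \<le> 1/4"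
    using window_parameters_exist[OF C \<mu> lipschitz_on_nonneg[OF G_lip]] by blast
  obtain r where "0 < r" and r: "\<forall>z\<in>tube \<eta> r. norm (P z - F z) \<le> \<epsilon> * infdist z \<eta>"
    using P_close \<epsilon>(1) unfolding little_o_infdist_def by blast
  txt \<open>e \<le> \<delta> puts every x s in the domain of the stability estimate, and e \<le> 1 / (2 * C + 2)
    keeps x and the comparison trajectory in the unit tube, where G = F.\<close>
  define e where "e = min \<delta> (min r (1 / (2 * C + 2)))"
  have e: "0 < e" "e \<le> \<delta>" "e \<le> 1 / (2 * C + 2)"
    using \<open>0 < \<delta>\<close> \<open>0 < r\<close> C by (simp_all add: e_def)
  have P_close_e: "\<forall>z\<in>tube \<eta> e. norm (P z - F z) \<le> \<epsilon> * infdist z \<eta>"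
    using r by (auto simp: tube_def e_def)
  show ?thesis
  proof (intro exI[of _ e] conjI allI impI \<open>0 < e\<close>)
    fix x t0
    assume x: "\<forall>t\<ge>t0. x t \<in> tube \<eta> e \<and> (x has_vector_derivative P (x t)) (at t within {t0..})"
    have "infdist (x (s + \<tau>)) \<eta> \<le> infdist (x (s + 0)) \<eta> / 2
        \<and> (\<forall>u\<in>{0..\<tau>}. infdist (x (s + u)) \<eta> \<le> (C + 1) * infdist (x (s + 0)) \<eta>)"
      if "t0 \<le> s" for s
    proof (rule infdist_halves_on_window[OF stab C \<mu> F_lip1 G_agree _ P_close_e less_imp_le[OF \<epsilon>(1)]
          _ _ e(2,3) less_imp_le[OF \<tau>(1)] \<tau>(2) \<epsilon>(2)])
      show "\<exists>y. y 0 = x (s + 0) \<and> (\<forall>u\<in>{0..\<tau>}. (y has_vector_derivative G (y u)) (at u within {0..\<tau>}))"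
        using lipschitz_ode_solution_exists[OF G_lip less_imp_le[OF \<tau>(1)]] by blast
      show "\<forall>u\<in>{0..\<tau>}. ((\<lambda>u. x (s + u)) has_vector_derivative P (x (s + u))) (at u within {0..\<tau>})"
        using has_vector_derivative_shifted_window[of t0 x "\<lambda>t. P (x t)" s \<tau>] x that by blast
      show "\<forall>u\<in>{0..\<tau>}. x (s + u) \<in> tube \<eta> e"
        using x that by auto
    qed
    then show "((\<lambda>t. infdist (x t) \<eta>) \<longlongrightarrow> 0) at_top"
      using \<tau>(1) C by (intro tendsto_zero_if_halving_windows[of \<tau> "C + 1" t0]) (auto simp: infdist_nonneg)
  qed
qed

section \<open>Sliding motion\<close>

lemma compact_range_if_periodic:
  fixes xs :: "real \<Rightarrow> 'a::topological_space"
  assumes xs: "continuous_on UNIV xs" and T: "0 < T" and per: "\<forall>t. xs (t + T) = xs t"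
  shows "compact (range xs)"
proof -
  have shift: "xs (s + real n * T) = xs s" for s n
  proof (induction n)
    case (Suc n)
    then show ?case
      using per[rule_format, of "s + real n * T"] by (simp add: algebra_simps)
  qed simp
  have "xs t \<in> xs ` {0..T}" for t
  proof -
    define n where "n = \<lfloor>t / T\<rfloor>"
    have "of_int n \<le> t / T" "t / T < of_int n + 1"
      unfolding n_def by linarith+
    then have s: "t - of_int n * T \<in> {0..T}"
      using T by (auto simp: field_simps)
    have "xs t = xs (t - of_int n * T)"
    proof (cases "0 \<le> n")
      case True
      then show ?thesis
        using shift[of "t - of_int n * T" "nat n"] by simp
    next
      case False
      then show ?thesis
        using shift[of t "nat (- n)"] by simp
    qed
    with s show ?thesis
      by blast
  qed
  then have "range xs = xs ` {0..T}"
    by auto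
  then show ?thesis
    using compact_continuous_image[OF continuous_on_subset[OF xs]] by auto
qed

lemma sliding_motion_equivalent_dynamics:
  assumes ueq: "\<forall>x\<in>{x. \<sigma> x = 0} \<inter> tube \<eta> e1. \<forall>t. ueq_set \<sigma> f g \<Delta> x t = {khat x - \<Delta> x t}"
    and "e \<le> e1" and motion: "sliding_motion f g \<Delta> \<sigma> (tube \<eta> e) x t0"
  shows "\<forall>t\<ge>t0. x t \<in> tube \<eta> e
    \<and> (x has_vector_derivative f (x t) + g (x t) *v khat (x t)) (at t within {t0..})"
proof (intro allI impI)
  fix t assume "t0 \<le> t"
  then have x: "\<sigma> (x t) = 0" "x t \<in> tube \<eta> e"
    "(x has_vector_derivative f (x t) + g (x t) *v (ueq \<sigma> f g \<Delta> (x t) t + \<Delta> (x t) t)) (at t within {t0..})"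
    using motion by (auto simp: sliding_motion_def)
  have "x t \<in> tube \<eta> e1"
    using x(2) \<open>e \<le> e1\<close> by (simp add: tube_def)
  then have "ueq \<sigma> f g \<Delta> (x t) t = khat (x t) - \<Delta> (x t) t"
    using ueq x(1) by (simp add: ueq_def)
  then show "x t \<in> tube \<eta> e \<and> (x has_vector_derivative f (x t) + g (x t) *v khat (x t)) (at t within {t0..})"
    using x(2,3) by simp
qed

theorem lemma5:
  fixes f :: "real^'n \<Rightarrow> real^'n"
    and g :: "real^'n \<Rightarrow> real^'m^'n"
    and \<Delta> :: "real^'n \<Rightarrow> real \<Rightarrow> real^'m"
    and \<Delta>M :: real
    and xs :: "real \<Rightarrow> real^'n"
    and T :: real
    and k :: "real^'n \<Rightarrow> real^'m"
    and \<sigma> :: "real^'n \<Rightarrow> real^'m"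
  assumes dim: "CARD('m) < CARD('n)"
    and f_C2: "C2_on UNIV f"
    and g_indep: "\<forall>x. \<forall>c::real^'m. (\<Sum>j\<in>UNIV. c $ j *s column j (g x)) = 0 \<longrightarrow> c = 0"
    and g_loclip: "\<forall>x. \<exists>e>0. \<exists>L. L-lipschitz_on (ball x e) g"
    and Delta_bound: "\<forall>x t. norm (\<Delta> x t) \<le> \<Delta>M"
    and T_pos: "T > 0"
    and xs_sol: "\<forall>t. (xs has_vector_derivative f (xs t)) (at t)"
    and xs_per: "\<forall>t. xs (t + T) = xs t"
    and f_nz: "\<forall>t. norm (f (xs t)) > 0"
    and k_C2: "C2_on UNIV k"
    and k_zero: "\<forall>t. k (xs t) = 0"
    and k_stab: "exp_orbitally_stable (\<lambda>y. f y + g y *v k y) (range xs)"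
    and sigma_P1: "solves_problem1 f g \<Delta> k (range xs) \<sigma>"
  shows "\<exists>e>0. \<forall>x t0. sliding_motion f g \<Delta> \<sigma> (tube (range xs) e) x t0
            \<longrightarrow> ((\<lambda>t. infdist (x t) (range xs)) \<longlongrightarrow> 0) at_top"
proof -
  txt \<open>Problem 1 already fixes the equivalent control on \<Sigma>.\<close>
  have "continuous_on UNIV xs"
    using xs_sol by (meson continuous_at_imp_continuous_on has_vector_derivative_continuous)
  then have orbit: "compact (range xs)" "range xs \<noteq> {}"
    using compact_range_if_periodic T_pos xs_per by auto
  obtain e1 khat where "0 < e1" and khat_C1: "C1_on UNIV khat"
    and khat_tangent: "\<forall>y\<in>range xs. khat y = 0 \<and> frechet_derivative khat (at y) = frechet_derivative k (at y)"
    and ueq: "\<forall>x\<in>{x. \<sigma> x = 0} \<inter> tube (range xs) e1. \<forall>t. ueq_set \<sigma> f g \<Delta> x t = {khat x - \<Delta> x t}"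
    using sigma_P1 unfolding solves_problem1_def by blast
  have g_lip: "locally_lipschitz g"
    using g_loclip by (simp add: locally_lipschitz_def)
  note mv = bounded_bilinear_matrix_vector_mult
  have "locally_lipschitz (\<lambda>y. f y + g y *v k y)"
    by (intro locally_lipschitz_add bounded_bilinear.locally_lipschitz_prod[OF mv] g_lip
        locally_lipschitz_if_C1_on C1_on_if_C2_on f_C2 k_C2)
  moreover have "little_o_infdist (range xs) (\<lambda>y. g y *v (khat y - k y))"
    using k_zero khat_tangent
    by (intro bounded_bilinear.little_o_infdist_prod[OF mv orbit] continuous_on_if_locally_lipschitz
        g_lip little_o_infdist_diff_if_tangent orbit khat_C1 C1_on_if_C2_on[OF k_C2]) auto
  then have "little_o_infdist (range xs) (\<lambda>y. (f y + g y *v khat y) - (f y + g y *v k y))"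
    by (simp add: bounded_bilinear.diff_right[OF mv])
  ultimately obtain e0 where "0 < e0" and attracts:
    "\<forall>x t0. (\<forall>t\<ge>t0. x t \<in> tube (range xs) e0
        \<and> (x has_vector_derivative f (x t) + g (x t) *v khat (x t)) (at t within {t0..}))
      \<longrightarrow> ((\<lambda>t. infdist (x t) (range xs)) \<longlongrightarrow> 0) at_top"
    using exp_orbitally_stable_perturbation_attracts[where P="\<lambda>y. f y + g y *v khat y", OF orbit k_stab]
    by blast
  show ?thesis
  proof (intro exI[of _ "min e0 e1"] conjI allI impI)
    fix x t0 assume "sliding_motion f g \<Delta> \<sigma> (tube (range xs) (min e0 e1)) x t0"
    then have "\<forall>t\<ge>t0. x t \<in> tube (range xs) (min e0 e1)
        \<and> (x has_vector_derivative f (x t) + g (x t) *v khat (x t)) (at t within {t0..})"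
      by (intro sliding_motion_equivalent_dynamics[OF ueq]) simp_all
    then show "((\<lambda>t. infdist (x t) (range xs)) \<longlongrightarrow> 0) at_top"
      by (intro attracts[rule_format]) (auto simp: tube_def)
  qed (simp add: \<open>0 < e0\<close> \<open>0 < e1\<close>)
qed

end
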